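(* In the setting below, let $a\in\mathcal{B}(x)\setminus\mathcal{B}(y)$, $b\in\mathcal{B}(y)$, with $x\neq y$ and $[x,y]=(x_0,\dots,x_m)$. (i) If $\gamma\in\mathcal{P}h(a,b;\mathcal{B}(y)^\complement)$ and $\gamma=\gamma_1\ast\cdots\ast\gamma_l\ast\gamma_f$ is its decomposition along $[x,y]$ with crossing vertices $(c_0,\dots,c_l)$, then $c_l=b$ and $\gamma_f=(b)$. (ii) For every $(c_0,\dots,c_l)\in\Xi_{[x,y]}$ with crossing indices $(i_1,\dots,i_l)$, the map $(\gamma_1,\dots,\gamma_l)\mapsto\gamma_1\ast\cdots\ast\gamma_l$ is a bijection from $\prod_{s=1}^l\mathcal{P}h(c_{s-1},c_s;\mathcal{B}(x_{i_s})^\complement)$ onto the set of $p$-admissible paths in $\mathcal{P}h(c_0,c_l;\mathcal{B}(x_m)^\complement)$ whose crossing vertices along $[x,y]$ are $(c_0,\dots,c_l)$.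
   Context: Setting: $X$ a tree of bounded valence, $p$ a transition kernel on $X_0$ with $(X_0,p)$ irreducible, $k\ge0$ with $d(u,v)>k\Rightarrow p(u,v)=0$. A $p$-admissible path is $(\omega_0,\dots,\omega_n)$ with $p(\omega_{i-1},\omega_i)>0$; $\mathcal{P}h(a,b;\Omega)$ is the set of those from $a$ to $b$ with intermediate vertices in $\Omega$; $\ast$ is concatenation. $\mathcal{B}(w)=\{v:d(w,v)\le k\}$, $\partial\mathcal{B}(w)=\{v:d(w,v)=k+1\}$, $\Xi_w=\{(a,b)\in\partial\mathcal{B}(w)\times\mathcal{B}(w):\mathcal{P}h(a,b;\mathcal{B}(w)^\complement)\ne\emptyset\}$. $\Xi_{[x,y]}$: tuples $(c_0,\dots,c_l)$, $0<l\le m$, with integers $0<i_1<\dots<i_l\le m$ (crossing indices, $i_s=1+\max\{i:c_{s-1}\in\mathcal{B}(x_i)\}$) such that $c_0\in\mathcal{B}(x)\cap\partial\mathcal{B}(x_{i_1})$, $c_j\in\mathcal{B}(x_{i_j})\cap\partial\mathcal{B}(x_{i_{j+1}})$, $c_l\in\mathcal{B}(x_{i_l})\cap\mathcal{B}(y)$, $(c_{j-1},c_j)\in\Xi_{x_{i_j}}$. The decomposition of a $p$-admissible path $\gamma$ from $a'\in\mathcal{B}(x)\setminus\mathcal{B}(y)$ to $b'\in\mathcal{B}(y)$ along $[x,y]$ is the unique writing $\gamma=\gamma_1\ast\cdots\ast\gamma_l\ast\gamma_f$ with $(c_0,\dots,c_l)\in\Xi_{[x,y]}$ (the crossing vertices),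 $\gamma_s\in\mathcal{P}h(c_{s-1},c_s;\mathcal{B}(x_{i_s})^\complement)$ and $\gamma_f$ a $p$-admissible path from $c_l$ to $b'$; concretely $c_s$ is the first vertex of $\gamma$ lying in $\mathcal{B}(x_{i_s})$. *)

theory Defs
  imports "HOL-Analysis.Analysis"
begin

definition is_walk :: "('v \<Rightarrow> 'v \<Rightarrow> bool) \<Rightarrow> 'v list \<Rightarrow> bool" where
  "is_walk E ws \<longleftrightarrow> ws \<noteq> [] \<and> (\<forall>i. Suc i < length ws \<longrightarrow> E (ws!i) (ws!Suc i))"

definition is_tree :: "('v \<Rightarrow> 'v \<Rightarrow> bool) \<Rightarrow> bool" where
  "is_tree E \<longleftrightarrow> (\<forall>u v. E u v \<longrightarrow> E v u) \<and> (\<forall>v. \<not> E v v) \<and>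
     (\<forall>u v. \<exists>!ws. is_walk E ws \<and> distinct ws \<and> hd ws = u \<and> last ws = v)"

definition bounded_valence :: "('v \<Rightarrow> 'v \<Rightarrow> bool) \<Rightarrow> bool" where
  "bounded_valence E \<longleftrightarrow> (\<exists>N::nat. \<forall>v. finite {w. E v w} \<and> card {w. E v w} \<le> N)"

definition gdist :: "('v \<Rightarrow> 'v \<Rightarrow> bool) \<Rightarrow> 'v \<Rightarrow> 'v \<Rightarrow> nat" where
  "gdist E u v = (LEAST n. \<exists>ws. is_walk E ws \<and> hd ws = u \<and> last ws = v \<and> length ws = Suc n)"

definition geodesic :: "('v \<Rightarrow> 'v \<Rightarrow> bool) \<Rightarrow> 'v \<Rightarrow> 'v \<Rightarrow> 'v list \<Rightarrow> bool" where
  "geodesic E x y xs \<longleftrightarrow> is_walk E xs \<and> hd xs = x \<and> last xs = y \<and> length xs = Suc (gdist E x y)"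

definition transition_kernel :: "('v \<Rightarrow> 'v \<Rightarrow> real) \<Rightarrow> bool" where
  "transition_kernel p \<longleftrightarrow> (\<forall>u v. 0 \<le> p u v) \<and> (\<forall>u. (p u has_sum 1) UNIV)"

definition adm :: "('v \<Rightarrow> 'v \<Rightarrow> real) \<Rightarrow> 'v list \<Rightarrow> bool" where
  "adm p \<gamma> \<longleftrightarrow> \<gamma> \<noteq> [] \<and> (\<forall>i. Suc i < length \<gamma> \<longrightarrow> 0 < p (\<gamma>!i) (\<gamma>!Suc i))"

definition irreducible_kernel :: "('v \<Rightarrow> 'v \<Rightarrow> real) \<Rightarrow> bool" where
  "irreducible_kernel p \<longleftrightarrow> (\<forall>u v. \<exists>\<gamma>. adm p \<gamma> \<and> hd \<gamma> = u \<and> last \<gamma> = v)"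

definition Ph :: "('v \<Rightarrow> 'v \<Rightarrow> real) \<Rightarrow> 'v \<Rightarrow> 'v \<Rightarrow> 'v set \<Rightarrow> 'v list set" where
  "Ph p a b \<Omega> = {\<gamma>. adm p \<gamma> \<and> hd \<gamma> = a \<and> last \<gamma> = b \<and>
                     (\<forall>i. 0 < i \<and> Suc i < length \<gamma> \<longrightarrow> \<gamma>!i \<in> \<Omega>)}"

text \<open>Concatenation gamma * delta (the last vertex of gamma is the first of delta).\<close>
definition pcat :: "'v list \<Rightarrow> 'v list \<Rightarrow> 'v list" where
  "pcat \<gamma> \<delta> = \<gamma> @ tl \<delta>"

definition pchain :: "'v list list \<Rightarrow> 'v list" where
  "pchain gs = foldl pcat (hd gs) (tl gs)"

definition kball :: "('v \<Rightarrow> 'v \<Rightarrow> bool) \<Rightarrow> nat \<Rightarrow> 'v \<Rightarrow> 'v set" where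
  "kball E k w = {v. gdist E w v \<le> k}"

definition ksphere :: "('v \<Rightarrow> 'v \<Rightarrow> bool) \<Rightarrow> nat \<Rightarrow> 'v \<Rightarrow> 'v set" where
  "ksphere E k w = {v. gdist E w v = Suc k}"

definition Xi_v :: "('v \<Rightarrow> 'v \<Rightarrow> bool) \<Rightarrow> ('v \<Rightarrow> 'v \<Rightarrow> real) \<Rightarrow> nat \<Rightarrow> 'v \<Rightarrow> ('v \<times> 'v) set" where
  "Xi_v E p k w = {(a,b). a \<in> ksphere E k w \<and> b \<in> kball E k w \<and> Ph p a b (- kball E k w) \<noteq> {}}"

definition cidx :: "('v \<Rightarrow> 'v \<Rightarrow> bool) \<Rightarrow> nat \<Rightarrow> 'v list \<Rightarrow> 'v \<Rightarrow> nat" where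
  "cidx E k xs c = Suc (Max {i. i < length xs \<and> c \<in> kball E k (xs!i)})"

definition Xi_geod :: "('v \<Rightarrow> 'v \<Rightarrow> bool) \<Rightarrow> ('v \<Rightarrow> 'v \<Rightarrow> real) \<Rightarrow> nat \<Rightarrow> 'v list \<Rightarrow> 'v list set" where
  "Xi_geod E p k xs = {cs. let l = length cs - 1; m = length xs - 1;
       ix = (\<lambda>s. cidx E k xs (cs!(s-1))) in
     0 < l \<and> l \<le> m \<and>
     (\<forall>s\<in>{1..l}. 0 < ix s \<and> ix s \<le> m) \<and>
     (\<forall>s. 1 \<le> s \<and> s < l \<longrightarrow> ix s < ix (Suc s)) \<and>
     cs!0 \<in> kball E k (xs!0) \<inter> ksphere E k (xs!(ix 1)) \<and>
     (\<forall>j. 1 \<le> j \<and> j < l \<longrightarrow> cs!j \<in> kball E k (xs!(ix j)) \<inter> ksphere E k (xs!(ix (Suc j)))) \<and>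
     cs!l \<in> kball E k (xs!(ix l)) \<inter> kball E k (xs!m) \<and>
     (\<forall>j\<in>{1..l}. (cs!(j-1), cs!j) \<in> Xi_v E p k (xs!(ix j)))}"

text \<open>gamma = gamma_1 * ... * gamma_l * gamma_f is a decomposition along xs with crossing
  vertices cs (gs = [gamma_1,...,gamma_l], 0-based: gs!s goes from cs!s to cs!(s+1) avoiding
  B(x_(i_(s+1))), where i_(s+1) = cidx (cs!s)).\<close>
definition decomp :: "('v \<Rightarrow> 'v \<Rightarrow> bool) \<Rightarrow> ('v \<Rightarrow> 'v \<Rightarrow> real) \<Rightarrow> nat \<Rightarrow> 'v list \<Rightarrow>
    'v list \<Rightarrow> 'v list \<Rightarrow> 'v list list \<Rightarrow> 'v list \<Rightarrow> bool" where
  "decomp E p k xs \<gamma> cs gs gf \<longleftrightarrow>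
     cs \<in> Xi_geod E p k xs \<and> length gs = length cs - 1 \<and>
     (\<forall>s < length gs. gs!s \<in> Ph p (cs!s) (cs!Suc s) (- kball E k (xs ! cidx E k xs (cs!s)))) \<and>
     adm p gf \<and> hd gf = last cs \<and> \<gamma> = pcat (pchain gs) gf"

end

theory Submission
  imports Defs
begin

text \<open>Cut the path at the first vertex in each successive ball \<open>B(x\<^sub>i)\<close> of the geodesic: a path
  that avoids a ball between its endpoints and ends inside it is the prefix up to its first hit of
  the ball, so the concatenation map is injective. Conversely, a piece that leaves from the sphere
  around \<open>x\<^sub>i\<close> on the far side from \<open>y\<close> and avoids \<open>B(x\<^sub>i)\<close> cannot cross the edge
  \<open>x\<^sub>i x\<^sub>i\<^sub>+\<^sub>1\<close> with jumps of length at most \<open>k\<close>, hence stays at distance \<open>> k\<close> from \<open>y\<close>; so the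
  concatenated path avoids \<open>B(y)\<close>, and its final piece must be trivial.\<close>

section \<open>Admissible paths and their concatenation\<close>

lemma is_walk_iff_successively: "is_walk E ws \<longleftrightarrow> ws \<noteq> [] \<and> successively E ws"
  unfolding is_walk_def successively_conv_nth by simp

lemma adm_iff_successively: "adm p \<gamma> \<longleftrightarrow> \<gamma> \<noteq> [] \<and> successively (\<lambda>u v. 0 < p u v) \<gamma>"
  unfolding adm_def successively_conv_nth by simp

lemma set_butlast_tl_conv_nth:
  "set (butlast (tl \<gamma>)) = {\<gamma>!i | i. 0 < i \<and> Suc i < length \<gamma>}"
proof (intro set_eqI iffI)
  fix v assume "v \<in> set (butlast (tl \<gamma>))"
  then obtain j where "v = \<gamma> ! Suc j" "Suc (Suc j) < length \<gamma>"
    by (auto simp: in_set_conv_nth nth_butlast nth_tl)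
  then show "v \<in> {\<gamma>!i | i. 0 < i \<and> Suc i < length \<gamma>}" by blast
next
  fix v assume "v \<in> {\<gamma>!i | i. 0 < i \<and> Suc i < length \<gamma>}"
  then obtain i where i: "v = \<gamma> ! i" "0 < i" "Suc i < length \<gamma>" by blast
  then have "butlast (tl \<gamma>) ! (i - 1) = v" "i - 1 < length (butlast (tl \<gamma>))"
    by (simp_all add: nth_butlast nth_tl)
  then show "v \<in> set (butlast (tl \<gamma>))" by (metis nth_mem)
qed

lemma Ph_iff_interior:
  "\<gamma> \<in> Ph p a b A \<longleftrightarrow> adm p \<gamma> \<and> hd \<gamma> = a \<and> last \<gamma> = b \<and> set (butlast (tl \<gamma>)) \<subseteq> A"
  unfolding Ph_def set_butlast_tl_conv_nth by blast

lemma Ph_nonempty: "\<gamma> \<in> Ph p a b A \<Longrightarrow> \<gamma> \<noteq> []"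
  unfolding Ph_def adm_def by blast

lemma Ph_hd_nth: "\<gamma> \<in> Ph p a b A \<Longrightarrow> \<gamma> ! 0 = a"
  unfolding Ph_def adm_def by (auto simp: hd_conv_nth)

lemma Ph_last_nth: "\<gamma> \<in> Ph p a b A \<Longrightarrow> \<gamma> ! (length \<gamma> - 1) = b"
  unfolding Ph_def adm_def by (auto simp: last_conv_nth)

lemma pcat_in_Ph:
  assumes "\<gamma> \<in> Ph p a b A" "\<delta> \<in> Ph p b c A" "b \<in> A"
  shows "pcat \<gamma> \<delta> \<in> Ph p a c A"
proof -
  obtain r where \<gamma>: "\<gamma> = a # r" using assms(1) unfolding Ph_def adm_def by (cases \<gamma>) auto
  obtain t where \<delta>: "\<delta> = b # t" using assms(2) unfolding Ph_def adm_def by (cases \<delta>) auto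
  have r: "successively (\<lambda>u v. 0 < p u v) (a # r)" "last (a # r) = b" "set (butlast r) \<subseteq> A"
    using assms(1) unfolding \<gamma> Ph_iff_interior adm_iff_successively by auto
  have t: "successively (\<lambda>u v. 0 < p u v) (b # t)" "last (b # t) = c" "set (butlast t) \<subseteq> A"
    using assms(2) unfolding \<delta> Ph_iff_interior adm_iff_successively by auto
  have "set r \<subseteq> insert b A"
  proof (cases "r = []")
    case False
    then obtain r' where "r = r' @ [b]"
      using r(2) by (metis append_butlast_last_id last_ConsR)
    then show ?thesis using r(3) by auto
  qed simp
  then have "set (butlast (r @ t)) \<subseteq> A"
    using r(3) t(3) assms(3) by (cases "t = []") (auto simp: butlast_append)
  moreover have "successively (\<lambda>u v. 0 < p u v) ((a # r) @ t)"
    unfolding successively_append_iff using r(1,2) t(1) by (cases t) auto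
  moreover have "last (a # r @ t) = c"
    using r(2) t(2) by (cases t) auto
  ultimately show ?thesis
    unfolding Ph_iff_interior adm_iff_successively pcat_def \<gamma> \<delta> by simp
qed

lemma foldl_pcat: "foldl pcat \<gamma> \<gamma>s = \<gamma> @ concat (map tl \<gamma>s)"
  by (induction \<gamma>s arbitrary: \<gamma>) (simp_all add: pcat_def)

lemma pchain_Cons: "\<delta> \<noteq> [] \<Longrightarrow> pchain (\<gamma> # \<delta> # \<gamma>s) = pcat \<gamma> (pchain (\<delta> # \<gamma>s))"
  by (simp add: pchain_def foldl_pcat pcat_def)

lemma tl_pchain: "\<gamma> \<noteq> [] \<Longrightarrow> tl (pchain (\<gamma> # \<gamma>s)) = concat (map tl (\<gamma> # \<gamma>s))"
  by (simp add: pchain_def foldl_pcat)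

lemma pchain_in_Ph:
  assumes "\<gamma>s \<noteq> []" "\<forall>s < length \<gamma>s. \<gamma>s!s \<in> Ph p (c s) (c (Suc s)) A"
    and "\<forall>s. 0 < s \<and> s < length \<gamma>s \<longrightarrow> c s \<in> A"
  shows "pchain \<gamma>s \<in> Ph p (c 0) (c (length \<gamma>s)) A"
  using assms
proof (induction \<gamma>s arbitrary: c)
  case (Cons \<gamma> \<gamma>s)
  show ?case
  proof (cases \<gamma>s)
    case Nil
    then show ?thesis using Cons.prems by (simp add: pchain_def)
  next
    case (Cons \<delta> \<delta>s)
    have "\<forall>s < length \<gamma>s. \<gamma>s!s \<in> Ph p (c (Suc s)) (c (Suc (Suc s))) A"
      using Cons.prems(2) by auto
    moreover have "\<forall>s. 0 < s \<and> s < length \<gamma>s \<longrightarrow> c (Suc s) \<in> A"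
      using Cons.prems(3) by auto
    ultimately have "pchain \<gamma>s \<in> Ph p (c 1) (c (length (\<gamma> # \<gamma>s))) A"
      using Cons.IH[of "\<lambda>s. c (Suc s)"] \<open>\<gamma>s = \<delta> # \<delta>s\<close> by simp
    moreover have "\<gamma> \<in> Ph p (c 0) (c 1) A" "c 1 \<in> A" "\<delta> \<in> Ph p (c 1) (c (Suc 1)) A"
      using Cons.prems \<open>\<gamma>s = \<delta> # \<delta>s\<close> by auto
    ultimately show ?thesis
      using pcat_in_Ph pchain_Cons[OF Ph_nonempty] \<open>\<gamma>s = \<delta> # \<delta>s\<close> by metis
  qed
qed simp

lemma Ph_enters_only_at_end:
  assumes "\<gamma> \<in> Ph p a b (- B)" "a \<notin> B" "i < length \<gamma>" "\<gamma>!i \<in> B"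
  shows "i = length \<gamma> - 1"
proof (rule ccontr)
  assume "i \<noteq> length \<gamma> - 1"
  then have "Suc i < length \<gamma>" using assms(3) by linarith
  moreover have "i \<noteq> 0" using assms(2,4) Ph_hd_nth[OF assms(1)] by (intro notI) simp
  ultimately show False using assms(1,4) unfolding Ph_def by blast
qed

lemma Ph_first_hit:
  assumes "\<gamma> \<in> Ph p a b (- B)" "a \<notin> B" "b \<in> B"
  shows "(LEAST i. (\<gamma> @ t)!i \<in> B) = length \<gamma> - 1"
proof (rule Least_equality)
  have "\<gamma> \<noteq> []" using assms(1) by (rule Ph_nonempty)
  then show "(\<gamma> @ t) ! (length \<gamma> - 1) \<in> B"
    using Ph_last_nth[OF assms(1)] assms(3) by (simp add: nth_append)
next
  fix i assume hit: "(\<gamma> @ t) ! i \<in> B"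
  show "length \<gamma> - 1 \<le> i"
  proof (rule ccontr)
    assume "\<not> length \<gamma> - 1 \<le> i"
    then have "i < length \<gamma>" by arith
    moreover from this have "\<gamma> ! i \<in> B" using hit by (simp add: nth_append)
    ultimately show False using Ph_enters_only_at_end[OF assms(1,2)] \<open>\<not> length \<gamma> - 1 \<le> i\<close> by auto
  qed
qed

lemma Ph_prefix_unique:
  assumes "\<gamma> @ t = \<delta> @ u" "\<gamma> \<in> Ph p a b (- B)" "\<delta> \<in> Ph p a b (- B)" "a \<notin> B" "b \<in> B"
  shows "\<gamma> = \<delta>"
proof -
  have "length \<gamma> - 1 = length \<delta> - 1"
    using Ph_first_hit[OF assms(2,4,5), of t] Ph_first_hit[OF assms(3,4,5), of u] assms(1) by simp
  then have "length \<gamma> = length \<delta>"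
    using Ph_nonempty[OF assms(2)] Ph_nonempty[OF assms(3)]
    by (metis One_nat_def Suc_pred length_greater_0_conv)
  then show ?thesis using assms(1) by (simp add: append_eq_append_conv)
qed

lemma pcat_in_Ph_imp_tail_singleton:
  assumes "pcat \<gamma> \<delta> \<in> Ph p a b (- B)" "a \<notin> B" "\<gamma> \<noteq> []" "\<delta> \<noteq> []"
    and "hd \<delta> = last \<gamma>" "last \<gamma> \<in> B"
  shows "\<delta> = [last \<gamma>]"
proof -
  have "length \<gamma> - 1 < length (pcat \<gamma> \<delta>)" "pcat \<gamma> \<delta> ! (length \<gamma> - 1) = last \<gamma>"
    using assms(3,4) by (cases \<gamma>, simp_all add: pcat_def nth_append last_conv_nth)
  then have "length \<gamma> - 1 = length (pcat \<gamma> \<delta>) - 1"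
    using Ph_enters_only_at_end[OF assms(1,2)] assms(6) by simp
  then have "length (tl \<delta>) = 0" using assms(3) by (cases \<gamma>) (simp_all add: pcat_def)
  then have "tl \<delta> = []" by (metis length_0_conv)
  then show ?thesis using assms(4,5) by (metis list.collapse)
qed

lemma concat_tl_first_hits_inj:
  assumes "length \<gamma>s = length \<delta>s"
    and "\<forall>s < length \<gamma>s. \<gamma>s!s \<in> Ph p (c s) (c (Suc s)) (- B s) \<and> \<delta>s!s \<in> Ph p (c s) (c (Suc s)) (- B s)"
    and "\<forall>s < length \<gamma>s. c s \<notin> B s \<and> c (Suc s) \<in> B s"
    and "concat (map tl \<gamma>s) = concat (map tl \<delta>s)"
  shows "\<gamma>s = \<delta>s"
  using assms
proof (induction \<gamma>s arbitrary: \<delta>s c B)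
  case (Cons \<gamma> \<gamma>s)
  then obtain \<delta> \<delta>s' where \<delta>s: "\<delta>s = \<delta> # \<delta>s'" by (cases \<delta>s) auto
  have \<gamma>: "\<gamma> \<in> Ph p (c 0) (c 1) (- B 0)" and \<delta>: "\<delta> \<in> Ph p (c 0) (c 1) (- B 0)"
    and "c 0 \<notin> B 0" "c 1 \<in> B 0"
    using Cons.prems(2,3) \<delta>s by auto
  obtain \<gamma>' \<delta>' where "\<gamma> = c 0 # \<gamma>'" "\<delta> = c 0 # \<delta>'"
    using \<gamma> \<delta> by (cases \<gamma>; cases \<delta>) (auto simp: Ph_def adm_def)
  then have "\<gamma> @ concat (map tl \<gamma>s) = \<delta> @ concat (map tl \<delta>s')"
    using Cons.prems(4) \<delta>s by simp
  then have "\<gamma> = \<delta>" and rest: "concat (map tl \<gamma>s) = concat (map tl \<delta>s')"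
    using Ph_prefix_unique[OF _ \<gamma> \<delta> \<open>c 0 \<notin> B 0\<close> \<open>c 1 \<in> B 0\<close>] by auto
  have "\<forall>s < length \<gamma>s. \<gamma>s!s \<in> Ph p (c (Suc s)) (c (Suc (Suc s))) (- B (Suc s))
      \<and> \<delta>s'!s \<in> Ph p (c (Suc s)) (c (Suc (Suc s))) (- B (Suc s))"
    using Cons.prems(2) \<delta>s by auto
  moreover have "\<forall>s < length \<gamma>s. c (Suc s) \<notin> B (Suc s) \<and> c (Suc (Suc s)) \<in> B (Suc s)"
    using Cons.prems(3) by auto
  moreover have "length \<gamma>s = length \<delta>s'" using Cons.prems(1) \<delta>s by simp
  ultimately have "\<gamma>s = \<delta>s'"
    using Cons.IH[of \<delta>s' "\<lambda>s. c (Suc s)" "\<lambda>s. B (Suc s)"] rest by blast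
  with \<open>\<gamma> = \<delta>\<close> \<delta>s show ?case by simp
qed simp

lemma pchain_inj_on_first_hits:
  assumes "\<forall>s < n. c s \<notin> B s \<and> c (Suc s) \<in> B s"
  shows "inj_on pchain {\<gamma>s. length \<gamma>s = n \<and> (\<forall>s < length \<gamma>s. \<gamma>s!s \<in> Ph p (c s) (c (Suc s)) (- B s))}"
proof (rule inj_onI, clarsimp)
  fix \<gamma>s \<delta>s
  assume \<gamma>s: "\<forall>s < length \<gamma>s. \<gamma>s!s \<in> Ph p (c s) (c (Suc s)) (- B s)"
    and \<delta>s: "\<forall>s < length \<gamma>s. \<delta>s!s \<in> Ph p (c s) (c (Suc s)) (- B s)"
    and len: "length \<delta>s = length \<gamma>s" and n: "n = length \<gamma>s"
    and eq: "pchain \<gamma>s = pchain \<delta>s"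
  show "\<gamma>s = \<delta>s"
  proof (cases "\<gamma>s = []")
    case False
    then have "\<delta>s \<noteq> []" "\<gamma>s!0 \<in> Ph p (c 0) (c 1) (- B 0)" "\<delta>s!0 \<in> Ph p (c 0) (c 1) (- B 0)"
      using len \<gamma>s \<delta>s by auto
    then have "\<delta>s \<noteq> []" "hd \<gamma>s \<noteq> []" "hd \<delta>s \<noteq> []"
      using \<open>\<gamma>s \<noteq> []\<close> by (auto simp: hd_conv_nth dest: Ph_nonempty)
    then have "concat (map tl \<gamma>s) = concat (map tl \<delta>s)"
      using eq tl_pchain \<open>\<gamma>s \<noteq> []\<close> by (metis list.collapse)
    then show ?thesis
      using concat_tl_first_hits_inj[of \<gamma>s \<delta>s p c B] len \<gamma>s \<delta>s assms n by auto
  qed (use len in simp)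
qed

section \<open>Distances in a tree\<close>

lemma gdist_le_walk_length:
  assumes "is_walk E ws"
  shows "gdist E (hd ws) (last ws) \<le> length ws - 1"
  unfolding gdist_def by (rule Least_le) (use assms in \<open>auto simp: is_walk_def intro!: exI[of _ ws]\<close>)

lemma is_walk_take: "is_walk E ws \<Longrightarrow> is_walk E (take (Suc j) ws)"
  unfolding is_walk_def by simp

lemma is_walk_drop: "is_walk E ws \<Longrightarrow> j < length ws \<Longrightarrow> is_walk E (drop j ws)"
  unfolding is_walk_def by simp

lemma gdist_hd_nth_le:
  assumes "is_walk E ws" "j < length ws"
  shows "gdist E (hd ws) (ws!j) \<le> j"
proof -
  have "hd (take (Suc j) ws) = hd ws" using assms(1) by (cases ws) (auto simp: is_walk_def)
  moreover have "last (take (Suc j) ws) = ws!j" using assms(2) by (simp add: take_Suc_conv_app_nth)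
  ultimately show ?thesis
    using gdist_le_walk_length[OF is_walk_take[OF assms(1), of j]] assms(2) by simp
qed

lemma gdist_nth_last_le:
  assumes "is_walk E ws" "j < length ws"
  shows "gdist E (ws!j) (last ws) \<le> length ws - 1 - j"
  using gdist_le_walk_length[OF is_walk_drop[OF assms]] assms
  by (simp add: hd_drop_conv_nth)

lemma gdist_edge_le: "E u v \<Longrightarrow> gdist E u v \<le> 1"
  using gdist_le_walk_length[of E "[u, v]"] by (simp add: is_walk_def nth_Cons split: nat.splits)

lemma distinct_if_length_gdist:
  assumes ws: "is_walk E ws" "length ws = Suc (gdist E (hd ws) (last ws))"
  shows "distinct ws"
proof (rule ccontr)
  assume "\<not> distinct ws"
  then obtain xs ys zs y where split: "ws = xs @ [y] @ ys @ [y] @ zs"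
    using not_distinct_decomp by blast
  have "successively E ((xs @ [y]) @ ys @ [y] @ zs)"
    using ws(1) split by (simp add: is_walk_iff_successively)
  then have "successively E ((xs @ [y]) @ zs)"
    unfolding successively_append_iff by (cases zs) auto
  then have "is_walk E (xs @ [y] @ zs)" by (simp add: is_walk_iff_successively)
  moreover have "hd (xs @ [y] @ zs) = hd ws"
    using split by (cases xs) simp_all
  moreover have "last (xs @ [y] @ zs) = last ws"
    using split by (cases "zs = []") simp_all
  ultimately show False
    using gdist_le_walk_length[of E "xs @ [y] @ zs"] ws(2) split by simp
qed

context
  fixes E :: "'v \<Rightarrow> 'v \<Rightarrow> bool"
  assumes tree: "is_tree E"
begin

lemma tree_sym: "E u v \<Longrightarrow> E v u"
  using tree unfolding is_tree_def by blast

lemma tree_irrefl: "\<not> E v v"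
  using tree unfolding is_tree_def by blast

lemma tree_simple_walk_unique:
  assumes "is_walk E ws" "distinct ws" "is_walk E ws'" "distinct ws'"
    and "hd ws = hd ws'" "last ws = last ws'"
  shows "ws = ws'"
proof -
  have "\<exists>!w. is_walk E w \<and> distinct w \<and> hd w = hd ws \<and> last w = last ws"
    using tree unfolding is_tree_def by blast
  from the1_equality[OF this, of ws] the1_equality[OF this, of ws'] show ?thesis
    using assms by simp
qed

lemma obtain_shortest_walk:
  obtains ws where "is_walk E ws" "hd ws = u" "last ws = v" "length ws = Suc (gdist E u v)"
    "distinct ws"
proof -
  have "\<exists>!ws. is_walk E ws \<and> distinct ws \<and> hd ws = u \<and> last ws = v"
    using tree unfolding is_tree_def by blast
  from ex1_implies_ex[OF this] obtain ws0 where "is_walk E ws0" "hd ws0 = u" "last ws0 = v"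
    by auto
  moreover have "length ws0 = Suc (length ws0 - 1)"
    using \<open>is_walk E ws0\<close> by (simp add: is_walk_def)
  ultimately have "\<exists>n ws. is_walk E ws \<and> hd ws = u \<and> last ws = v \<and> length ws = Suc n"
    by blast
  then have "\<exists>ws. is_walk E ws \<and> hd ws = u \<and> last ws = v \<and> length ws = Suc (gdist E u v)"
    unfolding gdist_def by (rule LeastI_ex)
  then obtain ws where ws: "is_walk E ws" "hd ws = u" "last ws = v" "length ws = Suc (gdist E u v)"
    by blast
  moreover have "distinct ws" using distinct_if_length_gdist[of E ws] ws by simp
  ultimately show ?thesis using that by blast
qed

lemma gdist_triangle: "gdist E u w \<le> gdist E u v + gdist E v w"
proof -
  obtain ws1 where 1: "is_walk E ws1" "hd ws1 = u" "last ws1 = v" "length ws1 = Suc (gdist E u v)"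
    using obtain_shortest_walk by metis
  obtain ws2 where 2: "is_walk E ws2" "hd ws2 = v" "last ws2 = w" "length ws2 = Suc (gdist E v w)"
    using obtain_shortest_walk by metis
  obtain y ys where ws2: "ws2 = y # ys" using 2(1) unfolding is_walk_def by (cases ws2) auto
  have "successively E (ws1 @ ys)"
    using 1 2 ws2 unfolding successively_append_iff is_walk_iff_successively
    by (auto simp: successively_Cons)
  then have "is_walk E (ws1 @ ys)" using 1(1) by (simp add: is_walk_iff_successively)
  moreover have "hd (ws1 @ ys) = u" "last (ws1 @ ys) = w"
    using 1 2 ws2 by (auto simp: is_walk_def)
  ultimately show ?thesis
    using gdist_le_walk_length[of E "ws1 @ ys"] 1(1,4) 2(4) ws2 by (simp add: is_walk_def)
qed

lemma gdist_commute: "gdist E u v = gdist E v u"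
proof -
  have le: "gdist E v u \<le> gdist E u v" for u v
  proof -
    obtain ws where ws: "is_walk E ws" "hd ws = u" "last ws = v" "length ws = Suc (gdist E u v)"
      using obtain_shortest_walk by metis
    have "successively E (rev ws)"
      using ws(1) tree_sym by (auto simp: is_walk_iff_successively elim: successively_mono)
    then have "is_walk E (rev ws)" using ws(1) by (simp add: is_walk_iff_successively)
    then show ?thesis
      using gdist_le_walk_length[of E "rev ws"] ws by (simp add: hd_rev last_rev)
  qed
  show ?thesis using le[of u v] le[of v u] by simp
qed

lemma gdist_adjacent_neq:
  assumes ab: "E a b"
  shows "gdist E v a \<noteq> gdist E v b"
proof
  assume eq: "gdist E v a = gdist E v b"
  obtain P where P: "is_walk E P" "hd P = v" "last P = a" "length P = Suc (gdist E v a)" "distinct P"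
    using obtain_shortest_walk by metis
  obtain Q where Q: "is_walk E Q" "hd Q = v" "last Q = b" "length Q = Suc (gdist E v b)" "distinct Q"
    using obtain_shortest_walk by metis
  have "b \<notin> set P"
  proof
    assume "b \<in> set P"
    then obtain j where j: "j < length P" "P!j = b" by (auto simp: in_set_conv_nth)
    have "P ! gdist E v a = a" using P(1,3,4) last_conv_nth[of P] by (auto simp: is_walk_def)
    then have "j < gdist E v a" using j P(4) ab tree_irrefl by (metis less_Suc_eq)
    moreover have "gdist E v b \<le> j" using gdist_hd_nth_le[OF P(1) j(1)] P(2) j(2) by simp
    ultimately show False using eq by simp
  qed
  moreover have "is_walk E (P @ [b])"
    using P(1,3) ab by (auto simp: is_walk_iff_successively successively_append_iff)
  ultimately have "P @ [b] = Q"
    using tree_simple_walk_unique[of "P @ [b]" Q] P Q by (auto simp: is_walk_def)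
  then show False using P(4) Q(4) eq by (metis length_append_singleton n_not_Suc_n)
qed

lemma gdist_across_edge:
  assumes ab: "E a b" and xy: "E x y"
    and x: "gdist E x a < gdist E x b" and y: "gdist E y b < gdist E y a"
  shows "gdist E x b = Suc (gdist E x a)" "gdist E y b = gdist E x a" "gdist E y a = Suc (gdist E x a)"
proof -
  show xb: "gdist E x b = Suc (gdist E x a)"
    using gdist_triangle[of x b a] gdist_edge_le[of E a b, OF ab] x by simp
  have "gdist E y a \<le> gdist E y x + gdist E x a" "gdist E y x \<le> 1"
    using gdist_triangle[of y a x] gdist_edge_le[of E y x, OF tree_sym[OF xy]] by auto
  moreover have "gdist E x b \<le> gdist E x y + gdist E y b" "gdist E x y \<le> 1"
    using gdist_triangle gdist_edge_le[of E x y, OF xy] by auto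
  ultimately show "gdist E y b = gdist E x a" "gdist E y a = Suc (gdist E x a)"
    using xb y by linarith+
qed

text \<open>Removing the edge \<open>ab\<close> splits the tree into the vertices closer to \<open>a\<close> and those closer
  to \<open>b\<close>.\<close>
lemma edge_across_sides:
  assumes ab: "E a b" and xy: "E x y"
    and x: "gdist E x a < gdist E x b" and y: "gdist E y b < gdist E y a"
  shows "x = a \<and> y = b"
proof -
  define n where "n = gdist E x a"
  have xb: "gdist E x b = Suc n" and yb: "gdist E y b = n" and ya: "gdist E y a = Suc n"
    using gdist_across_edge[OF assms] unfolding n_def by simp_all
  obtain P where P: "is_walk E P" "hd P = x" "last P = a" "length P = Suc n" "distinct P"
    using obtain_shortest_walk n_def by metis
  obtain Q where Q: "is_walk E Q" "hd Q = y" "last Q = b" "length Q = Suc n" "distinct Q"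
    using obtain_shortest_walk yb by metis
  have "y \<notin> set P"
  proof
    assume "y \<in> set P"
    then obtain j where "j < length P" "P!j = y" by (auto simp: in_set_conv_nth)
    then show False using gdist_nth_last_le[OF P(1), of j] P(3,4) ya by simp
  qed
  moreover have "a \<notin> set Q"
  proof
    assume "a \<in> set Q"
    then obtain j where "j < length Q" "Q!j = a" by (auto simp: in_set_conv_nth)
    then show False using gdist_hd_nth_le[OF Q(1), of j] Q(2,4) ya by simp
  qed
  moreover have "is_walk E (y # P)" "is_walk E (Q @ [a])"
    using P(1,2) Q(1,3) tree_sym[OF xy] tree_sym[OF ab]
    by (auto simp: is_walk_iff_successively successively_Cons successively_append_iff)
  ultimately have PQ: "y # P = Q @ [a]"
    using tree_simple_walk_unique[of "y # P" "Q @ [a]"] P Q by (auto simp: is_walk_def last_ConsR)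
  show ?thesis
  proof (cases n)
    case 0
    then have "P = [x]" "Q = [y]" using P(2,4) Q(2,4) by (cases P; cases Q; simp)+
    then show ?thesis using P(3) Q(3) by simp
  next
    case (Suc n')
    have "P ! n' = (Q @ [a]) ! n" using PQ Suc by (metis nth_Cons_Suc)
    also have "\<dots> = b" using Q(1,3,4) last_conv_nth[of Q] by (auto simp: nth_append is_walk_def)
    finally have "gdist E x b \<le> n'" using gdist_hd_nth_le[OF P(1), of n'] P(2,4) Suc by simp
    then show ?thesis using xb Suc by simp
  qed
qed

lemma gdist_le_across_edge:
  assumes ab: "E a b" and u: "gdist E u a < gdist E u b" and w: "gdist E w b < gdist E w a"
  shows "gdist E u a \<le> gdist E u w"
proof -
  obtain ws where ws: "is_walk E ws" "hd ws = u" "last ws = w" "length ws = Suc (gdist E u w)"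
    using obtain_shortest_walk by metis
  define b_side where "b_side j \<longleftrightarrow> gdist E (ws!j) b < gdist E (ws!j) a" for j
  have "b_side (length ws - 1)"
    using ws(3,4) w last_conv_nth[of ws] unfolding b_side_def by fastforce
  define j where "j = (LEAST j. b_side j)"
  have j: "b_side j" "j \<le> length ws - 1"
    unfolding j_def using \<open>b_side (length ws - 1)\<close> by (rule LeastI, rule Least_le)
  have "j \<noteq> 0"
  proof
    assume "j = 0"
    then show False using j(1) u ws(1,2) unfolding b_side_def by (auto simp: hd_conv_nth is_walk_def)
  qed
  then have "\<not> b_side (j - 1)" unfolding j_def by (intro not_less_Least) simp
  have "Suc (j - 1) < length ws" using \<open>j \<noteq> 0\<close> j(2) ws(4) by simp
  then have "E (ws ! (j - 1)) (ws ! j)"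
    using ws(1) \<open>j \<noteq> 0\<close> unfolding is_walk_def by fastforce
  moreover have "gdist E (ws ! (j - 1)) a < gdist E (ws ! (j - 1)) b"
    using \<open>\<not> b_side (j - 1)\<close> gdist_adjacent_neq[OF ab, of "ws ! (j - 1)"] unfolding b_side_def
    by linarith
  ultimately have "ws ! (j - 1) = a"
    using edge_across_sides[OF ab] j(1) unfolding b_side_def by blast
  then show ?thesis
    using gdist_hd_nth_le[OF ws(1), of "j - 1"] ws(2,4) j(2) by fastforce
qed

text \<open>A jump from the side of \<open>a\<close> to the side of \<open>b\<close> is at least as long as the distance to \<open>a\<close>,
  which stays above \<open>k\<close> while the path avoids the \<open>k\<close>-ball around \<open>a\<close>.\<close>
lemma Ph_avoiding_kball_stays_on_side:
  assumes range: "\<forall>u v. gdist E u v > k \<longrightarrow> p u v = 0"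
    and ab: "E a b" and ca: "gdist E a c = Suc k" and cb: "k < gdist E b c"
    and \<gamma>: "\<gamma> \<in> Ph p c c' (- kball E k a)" and j: "Suc j < length \<gamma>"
  shows "gdist E (\<gamma>!j) a < gdist E (\<gamma>!j) b \<and> k < gdist E (\<gamma>!j) a"
  using j
proof (induction j)
  case 0
  have "gdist E c a = Suc k" "k < gdist E c b" using ca cb gdist_commute by metis+
  then show ?case using Ph_hd_nth[OF \<gamma>] gdist_adjacent_neq[OF ab, of c] by auto
next
  case (Suc j)
  then have a_side: "gdist E (\<gamma>!j) a < gdist E (\<gamma>!j) b" and far: "k < gdist E (\<gamma>!j) a"
    by auto
  have "0 < p (\<gamma>!j) (\<gamma>!Suc j)"
    using \<gamma> Suc.prems unfolding Ph_def adm_def by simp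
  then have "gdist E (\<gamma>!j) (\<gamma>!Suc j) \<le> k"
    using range leI by fastforce
  then have "\<not> gdist E (\<gamma>!Suc j) b < gdist E (\<gamma>!Suc j) a"
    using gdist_le_across_edge[OF ab a_side] far by fastforce
  then have "gdist E (\<gamma>!Suc j) a < gdist E (\<gamma>!Suc j) b"
    using gdist_adjacent_neq[OF ab, of "\<gamma>!Suc j"] by linarith
  moreover have "\<gamma>!Suc j \<in> - kball E k a" using \<gamma> Suc.prems unfolding Ph_def by blast
  then have "k < gdist E (\<gamma>!Suc j) a" by (simp add: kball_def gdist_commute[of a])
  ultimately show ?case by blast
qed

lemma Ph_avoiding_kball_avoids_kball_across_edge:
  assumes range: "\<forall>u v. gdist E u v > k \<longrightarrow> p u v = 0"
    and ab: "E a b" and t: "gdist E t b < gdist E t a"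
    and ca: "gdist E a c = Suc k" and cb: "k < gdist E b c"
    and \<gamma>: "\<gamma> \<in> Ph p c c' (- kball E k a)"
  shows "\<gamma> \<in> Ph p c c' (- kball E k t)"
proof -
  have "\<gamma>!j \<notin> kball E k t" if "Suc j < length \<gamma>" for j
  proof -
    have "gdist E (\<gamma>!j) a < gdist E (\<gamma>!j) b" "k < gdist E (\<gamma>!j) a"
      using Ph_avoiding_kball_stays_on_side[OF range ab ca cb \<gamma> that] by auto
    then have "k < gdist E (\<gamma>!j) t"
      using gdist_le_across_edge[OF ab _ t] by fastforce
    then show ?thesis using gdist_commute[of t "\<gamma>!j"] unfolding kball_def by simp
  qed
  then show ?thesis using \<gamma> unfolding Ph_def by auto
qed

lemma geodesic_step:
  assumes "geodesic E x y xs" "Suc i < length xs"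
  shows "E (xs!i) (xs!Suc i)" "gdist E y (xs!Suc i) < gdist E y (xs!i)"
proof -
  have w: "is_walk E xs" and "hd xs = x" "last xs = y" "length xs = Suc (gdist E x y)"
    using assms(1) unfolding geodesic_def by auto
  show "E (xs!i) (xs!Suc i)" using w assms(2) unfolding is_walk_def by blast
  have "gdist E (xs!Suc i) y \<le> length xs - 1 - Suc i"
    using gdist_nth_last_le[OF w assms(2)] \<open>last xs = y\<close> by simp
  moreover have "gdist E x y \<le> gdist E x (xs!i) + gdist E (xs!i) y" by (rule gdist_triangle)
  moreover have "gdist E x (xs!i) \<le> i"
    using gdist_hd_nth_le[OF w, of i] assms(2) \<open>hd xs = x\<close> by simp
  ultimately have "gdist E (xs!Suc i) y < gdist E (xs!i) y"
    using \<open>length xs = Suc (gdist E x y)\<close> assms(2) by arith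
  then show "gdist E y (xs!Suc i) < gdist E y (xs!i)"
    using gdist_commute[of y "xs!i"] gdist_commute[of y "xs!Suc i"] by linarith
qed

end

section \<open>Crossing data along a geodesic\<close>

definition crossing_segments ::
    "('v \<Rightarrow> 'v \<Rightarrow> bool) \<Rightarrow> ('v \<Rightarrow> 'v \<Rightarrow> real) \<Rightarrow> nat \<Rightarrow> 'v list \<Rightarrow> 'v list \<Rightarrow> 'v list list set" where
  "crossing_segments E p k xs cs =
     {\<gamma>s. length \<gamma>s = length cs - 1 \<and>
          (\<forall>s < length \<gamma>s. \<gamma>s!s \<in> Ph p (cs!s) (cs!Suc s) (- kball E k (xs ! cidx E k xs (cs!s))))}"

lemma decomp_iff:
  "decomp E p k xs \<gamma> cs \<gamma>s \<gamma>f \<longleftrightarrow>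
     cs \<in> Xi_geod E p k xs \<and> \<gamma>s \<in> crossing_segments E p k xs cs \<and>
     adm p \<gamma>f \<and> hd \<gamma>f = last cs \<and> \<gamma> = pcat (pchain \<gamma>s) \<gamma>f"
  unfolding decomp_def crossing_segments_def by auto

lemma less_cidx: "j < length xs \<Longrightarrow> c \<in> kball E k (xs!j) \<Longrightarrow> j < cidx E k xs c"
  unfolding cidx_def by (simp add: le_imp_less_Suc)

lemma Xi_geodE:
  assumes "cs \<in> Xi_geod E p k xs"
  obtains "0 < length cs - 1" "length cs - 1 \<le> length xs - 1"
    "cs ! (length cs - 1) \<in> kball E k (xs ! (length xs - 1))"
    "\<And>s. s < length cs - 1 \<Longrightarrow> cidx E k xs (cs!s) \<le> length xs - 1 \<and>
        cs!s \<in> ksphere E k (xs ! cidx E k xs (cs!s)) \<and> cs!Suc s \<in> kball E k (xs ! cidx E k xs (cs!s))"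
proof
  define l m where "l = length cs - 1" and "m = length xs - 1"
  define ix where "ix s = cidx E k xs (cs!(s - 1))" for s
  have X: "0 < l" "l \<le> m" "\<forall>s\<in>{1..l}. 0 < ix s \<and> ix s \<le> m"
    "cs!0 \<in> ksphere E k (xs!(ix 1))"
    "\<forall>j. 1 \<le> j \<and> j < l \<longrightarrow> cs!j \<in> kball E k (xs!(ix j)) \<inter> ksphere E k (xs!(ix (Suc j)))"
    "cs!l \<in> kball E k (xs!(ix l)) \<inter> kball E k (xs!m)"
    using assms unfolding Xi_geod_def Let_def l_def m_def ix_def by auto
  show "0 < length cs - 1" "length cs - 1 \<le> length xs - 1"
    "cs ! (length cs - 1) \<in> kball E k (xs ! (length xs - 1))"
    using X l_def m_def by auto
  fix s assume s: "s < length cs - 1"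
  have ix: "ix (Suc s) = cidx E k xs (cs!s)" unfolding ix_def by simp
  have "cidx E k xs (cs!s) \<le> length xs - 1"
    using X(3) s ix unfolding l_def m_def by (metis Suc_leI atLeastAtMost_iff le_add1 plus_1_eq_Suc)
  moreover have "cs!s \<in> ksphere E k (xs ! cidx E k xs (cs!s))"
    using X(4,5) s ix unfolding l_def by (cases s) auto
  moreover have "cs!Suc s \<in> kball E k (xs ! cidx E k xs (cs!s))"
  proof (cases "Suc s = l")
    case True
    then show ?thesis using X(6) ix by auto
  next
    case False
    then have "1 \<le> Suc s \<and> Suc s < l" using s l_def by simp
    then show ?thesis using X(5) ix by auto
  qed
  ultimately show "cidx E k xs (cs!s) \<le> length xs - 1 \<and>
        cs!s \<in> ksphere E k (xs ! cidx E k xs (cs!s)) \<and> cs!Suc s \<in> kball E k (xs ! cidx E k xs (cs!s))"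
    by blast
qed

lemma Xi_geod_last_in_kball:
  assumes "cs \<in> Xi_geod E p k xs"
  shows "last cs \<in> kball E k (last xs)"
proof -
  obtain "0 < length cs - 1" "length cs - 1 \<le> length xs - 1"
    "cs ! (length cs - 1) \<in> kball E k (xs ! (length xs - 1))"
    using assms by (rule Xi_geodE)
  moreover from this have "cs \<noteq> []" "xs \<noteq> []" by auto
  ultimately show ?thesis by (simp add: last_conv_nth)
qed

lemma Xi_geod_crossing_not_in_last_kball:
  assumes "cs \<in> Xi_geod E p k xs" "s < length cs - 1"
  shows "cs!s \<notin> kball E k (last xs)"
proof
  assume "cs!s \<in> kball E k (last xs)"
  moreover have "cidx E k xs (cs!s) \<le> length xs - 1" "xs \<noteq> []"
    using assms by (auto elim: Xi_geodE)
  ultimately have "length xs - 1 < cidx E k xs (cs!s)"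
    using less_cidx[of "length xs - 1" xs "cs!s"] by (simp add: last_conv_nth)
  with \<open>cidx E k xs (cs!s) \<le> length xs - 1\<close> show False by simp
qed

lemma pchain_crossing_segments_in_Ph:
  assumes cs: "cs \<in> Xi_geod E p k xs" and \<gamma>s: "\<gamma>s \<in> crossing_segments E p k xs cs"
    and segs: "\<forall>s < length \<gamma>s. \<gamma>s!s \<in> Ph p (cs!s) (cs!Suc s) A"
    and crossings: "\<forall>s. 0 < s \<and> s < length \<gamma>s \<longrightarrow> cs!s \<in> A"
  shows "pchain \<gamma>s \<in> Ph p (hd cs) (last cs) A"
proof -
  have l: "0 < length \<gamma>s" "length \<gamma>s = length cs - 1"
    using \<gamma>s cs unfolding crossing_segments_def by (auto elim: Xi_geodE)
  then have "cs \<noteq> []" by auto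
  then have "hd cs = cs!0" "last cs = cs!length \<gamma>s"
    using l(2) by (simp_all add: hd_conv_nth last_conv_nth)
  then show ?thesis
    using pchain_in_Ph[of \<gamma>s p "(!) cs" A] segs crossings l(1) by simp
qed

text \<open>A path from outside the last ball \<open>B(x\<^sub>m)\<close> that avoids it in between can only enter it at
  its end; the chain of the decomposition already ends there, so the final piece is trivial.\<close>
lemma decomp_final_piece_trivial:
  assumes d: "decomp E p k xs \<gamma> cs \<gamma>s \<gamma>f"
    and \<gamma>: "\<gamma> \<in> Ph p a b (- kball E k (last xs))" and a: "a \<notin> kball E k (last xs)"
  shows "\<gamma> = pchain \<gamma>s" "last cs = b" "\<gamma>f = [b]"
proof -
  have cs: "cs \<in> Xi_geod E p k xs" and \<gamma>s: "\<gamma>s \<in> crossing_segments E p k xs cs"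
    and \<gamma>f: "\<gamma>f \<noteq> []" "hd \<gamma>f = last cs" and eq: "\<gamma> = pcat (pchain \<gamma>s) \<gamma>f"
    using d unfolding decomp_iff adm_def by auto
  have "\<forall>s < length \<gamma>s. \<gamma>s!s \<in> Ph p (cs!s) (cs!Suc s) UNIV"
    using \<gamma>s unfolding crossing_segments_def Ph_def by auto
  then have "pchain \<gamma>s \<in> Ph p (hd cs) (last cs) UNIV"
    using pchain_crossing_segments_in_Ph[OF cs \<gamma>s] by simp
  then have "pchain \<gamma>s \<noteq> []" "last (pchain \<gamma>s) = last cs"
    unfolding Ph_def adm_def by auto
  moreover have "last cs \<in> kball E k (last xs)" using cs by (rule Xi_geod_last_in_kball)
  ultimately have "\<gamma>f = [last cs]"
    using pcat_in_Ph_imp_tail_singleton[of "pchain \<gamma>s" \<gamma>f p a b] \<gamma> a \<gamma>f eq by simp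
  moreover from this have "\<gamma> = pchain \<gamma>s" using eq by (simp add: pcat_def)
  moreover from this have "last cs = b"
    using \<gamma> \<open>last (pchain \<gamma>s) = last cs\<close> unfolding Ph_def by simp
  ultimately show "\<gamma> = pchain \<gamma>s" "last cs = b" "\<gamma>f = [b]" by simp_all
qed

lemma crossing_segment_avoids_last_kball:
  assumes tree: "is_tree E" and range: "\<forall>u v. gdist E u v > k \<longrightarrow> p u v = 0"
    and geo: "geodesic E x y xs" and cs: "cs \<in> Xi_geod E p k xs" and s: "s < length cs - 1"
    and \<gamma>: "\<gamma> \<in> Ph p (cs!s) (cs!Suc s) (- kball E k (xs ! cidx E k xs (cs!s)))"
  shows "\<gamma> \<in> Ph p (cs!s) (cs!Suc s) (- kball E k y)"
proof -
  define i where "i = cidx E k xs (cs!s)"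
  have i: "i \<le> length xs - 1" "cs!s \<in> ksphere E k (xs!i)"
    using cs s unfolding i_def by (auto elim: Xi_geodE)
  have y: "y = last xs" "xs \<noteq> []" using geo unfolding geodesic_def is_walk_def by auto
  show ?thesis
  proof (cases "i = length xs - 1")
    case True
    then show ?thesis using \<gamma> y unfolding i_def by (simp add: last_conv_nth)
  next
    case False
    then have si: "Suc i < length xs" using i(1) by linarith
    have "cs!s \<notin> kball E k (xs!Suc i)"
      using less_cidx[OF si, of "cs!s" E k] unfolding i_def by auto
    then have "k < gdist E (xs!Suc i) (cs!s)" unfolding kball_def by simp
    moreover have "gdist E (xs!i) (cs!s) = Suc k" using i(2) unfolding ksphere_def by simp
    ultimately show ?thesis
      using Ph_avoiding_kball_avoids_kball_across_edge[OF tree range geodesic_step[OF tree geo si]]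
        \<gamma> unfolding i_def by blast
  qed
qed

lemma bij_betw_pchain_crossing_segments:
  assumes tree: "is_tree E" and range: "\<forall>u v. gdist E u v > k \<longrightarrow> p u v = 0"
    and geo: "geodesic E x y xs" and cs: "cs \<in> Xi_geod E p k xs"
  shows "bij_betw pchain (crossing_segments E p k xs cs)
           {\<gamma> \<in> Ph p (hd cs) (last cs) (- kball E k (last xs)). \<exists>\<gamma>s \<gamma>f. decomp E p k xs \<gamma> cs \<gamma>s \<gamma>f}"
    (is "bij_betw pchain ?S ?P")
proof -
  have y: "last xs = y" using geo unfolding geodesic_def by simp
  have cross: "\<forall>s < length cs - 1. cs!s \<notin> kball E k (xs ! cidx E k xs (cs!s)) \<and>
      cs!Suc s \<in> kball E k (xs ! cidx E k xs (cs!s))"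
    using cs by (auto elim!: Xi_geodE simp: ksphere_def kball_def)
  have "inj_on pchain ?S"
    using pchain_inj_on_first_hits[OF cross] unfolding crossing_segments_def by simp
  moreover have "pchain \<gamma>s \<in> ?P" if \<gamma>s: "\<gamma>s \<in> ?S" for \<gamma>s
  proof -
    have "\<forall>s < length \<gamma>s. \<gamma>s!s \<in> Ph p (cs!s) (cs!Suc s) (- kball E k (last xs))"
      using crossing_segment_avoids_last_kball[OF tree range geo cs] \<gamma>s y
      unfolding crossing_segments_def by auto
    moreover have "\<forall>s. 0 < s \<and> s < length \<gamma>s \<longrightarrow> cs!s \<in> - kball E k (last xs)"
      using Xi_geod_crossing_not_in_last_kball[OF cs] \<gamma>s unfolding crossing_segments_def by auto
    ultimately have "pchain \<gamma>s \<in> Ph p (hd cs) (last cs) (- kball E k (last xs))"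
      by (rule pchain_crossing_segments_in_Ph[OF cs \<gamma>s])
    moreover have "decomp E p k xs (pchain \<gamma>s) cs \<gamma>s [last cs]"
      using cs \<gamma>s unfolding decomp_iff by (simp add: adm_def pcat_def)
    ultimately show ?thesis by blast
  qed
  moreover have "\<gamma> \<in> pchain ` ?S" if \<gamma>: "\<gamma> \<in> ?P" for \<gamma>
  proof -
    obtain \<gamma>s \<gamma>f where d: "decomp E p k xs \<gamma> cs \<gamma>s \<gamma>f" using \<gamma> by blast
    have "0 < length cs - 1" using cs by (rule Xi_geodE)
    then have "hd cs \<notin> kball E k (last xs)"
      using Xi_geod_crossing_not_in_last_kball[OF cs, of 0] by (cases cs) auto
    then have "\<gamma> = pchain \<gamma>s" using decomp_final_piece_trivial(1)[OF d] \<gamma> by blast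
    moreover have "\<gamma>s \<in> ?S" using d unfolding decomp_iff by blast
    ultimately show ?thesis by blast
  qed
  ultimately show ?thesis unfolding bij_betw_def by blast
qed

theorem corollary3p21:
  fixes E :: "'v \<Rightarrow> 'v \<Rightarrow> bool" and p :: "'v \<Rightarrow> 'v \<Rightarrow> real" and k :: nat
    and x y a b :: 'v and xs :: "'v list"
  assumes tree: "is_tree E" and valence: "bounded_valence E"
    and kernel: "transition_kernel p" and irred: "irreducible_kernel p"
    and range: "\<forall>u v. gdist E u v > k \<longrightarrow> p u v = 0"
    and a: "a \<in> kball E k x - kball E k y" and b: "b \<in> kball E k y"
    and xy: "x \<noteq> y" and geo: "geodesic E x y xs"
  shows "(\<forall>\<gamma> cs gs gf. \<gamma> \<in> Ph p a b (- kball E k y) \<and> decomp E p k xs \<gamma> cs gs gf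
            \<longrightarrow> last cs = b \<and> gf = [b])
       \<and> (\<forall>cs \<in> Xi_geod E p k xs.
            bij_betw pchain
              {gs. length gs = length cs - 1 \<and>
                   (\<forall>s < length gs. gs!s \<in> Ph p (cs!s) (cs!Suc s) (- kball E k (xs ! cidx E k xs (cs!s))))}
              {\<gamma> \<in> Ph p (hd cs) (last cs) (- kball E k (last xs)).
                   \<exists>gs gf. decomp E p k xs \<gamma> cs gs gf})"
proof -
  have y: "last xs = y" using geo unfolding geodesic_def by simp
  have "last cs = b \<and> gf = [b]"
    if "\<gamma> \<in> Ph p a b (- kball E k y)" "decomp E p k xs \<gamma> cs gs gf" for \<gamma> cs gs gf
    using decomp_final_piece_trivial(2,3)[OF that(2)] that(1) a y by simp
  moreover have "bij_betw pchain (crossing_segments E p k xs cs)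
      {\<gamma> \<in> Ph p (hd cs) (last cs) (- kball E k (last xs)). \<exists>gs gf. decomp E p k xs \<gamma> cs gs gf}"
    if "cs \<in> Xi_geod E p k xs" for cs
    using bij_betw_pchain_crossing_segments[OF tree range geo that] .
  ultimately show ?thesis unfolding crossing_segments_def by blast
qed

end
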